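(* Let $p$ be a prime and let $a,b,c$ be positive integers such that $c$ is a primitive divisor of $p^a-1$ and $bc$ is a primitive divisor of $p^{ab}-1$. Then the Waring numbers below exist and $$g\Big(\tfrac{p^{ab}-1}{bc},\,p^{ab}\Big)=b\,g\Big(\tfrac{p^a-1}{c},\,p^a\Big).$$
   Context: For a prime power $q$ and a positive integer $k$, the Waring number $g(k,q)$ is the smallest $s$ (if it exists) such that every element of $\mathbb{F}_q$ can be written as $x_1^k+\cdots+x_s^k$ with $x_i\in\mathbb{F}_q$. An integer $e$ is a primitive divisor of $p^a-1$ if $e\mid p^a-1$ and $e\nmid p^t-1$ for every $1\le t<a$. *)

theory Defs
  imports "HOL-Computational_Algebra.Primes"
begin

definition waring_repr :: "'a::comm_semiring_1 itself \<Rightarrow> nat \<Rightarrow> nat \<Rightarrow> bool" where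
  "waring_repr T k s \<longleftrightarrow>
     (\<forall>y::'a. \<exists>xs::'a list. length xs = s \<and> y = (\<Sum>x\<leftarrow>xs. x ^ k))"

definition waring_exists :: "'a::comm_semiring_1 itself \<Rightarrow> nat \<Rightarrow> bool" where
  "waring_exists T k \<longleftrightarrow> (\<exists>s. waring_repr T k s)"

definition waring_number :: "'a::comm_semiring_1 itself \<Rightarrow> nat \<Rightarrow> nat" where
  "waring_number T k = (LEAST s. waring_repr T k s)"

definition primitive_divisor :: "nat \<Rightarrow> nat \<Rightarrow> nat \<Rightarrow> bool" where
  "primitive_divisor e p a \<longleftrightarrow>
     e dvd p ^ a - 1 \<and> (\<forall>t. 1 \<le> t \<and> t < a \<longrightarrow> \<not> e dvd p ^ t - 1)"

end

theory Submission
  imports Defs "HOL-Number_Theory.Residues" "HOL-Computational_Algebra.Polynomial"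
begin

text \<open>Let \<open>q = p ^ a\<close>, \<open>F = GF(q)\<close>, \<open>E = GF(q ^ b)\<close>, \<open>k = (q - 1) / c\<close> and
  \<open>K = (q ^ b - 1) / (b c)\<close>. The nonzero \<open>k\<close>-th powers of \<open>F\<close> form the group generated by an
  element \<open>\<eta>\<close> of order \<open>c\<close>, and the nonzero \<open>K\<close>-th powers of \<open>E\<close> the group generated by an
  element \<open>\<zeta>\<close> of order \<open>b c\<close>. Embed \<open>F\<close> into \<open>E\<close>. Primitivity of \<open>b c\<close> makes the
  conjugates \<open>\<zeta> ^ q ^ i\<close>, \<open>i < b\<close>, pairwise distinct, so \<open>1, \<zeta>, \<dots>, \<zeta> ^ (b - 1)\<close> is a
  basis of \<open>E\<close> over \<open>F\<close>; and as \<open>\<zeta> ^ b\<close> and the image of \<open>\<eta>\<close> generate the same group of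
  \<open>c\<close>-th roots of unity, every nonzero \<open>K\<close>-th power of \<open>E\<close> is some \<open>\<zeta> ^ j\<close>, \<open>j < b\<close>, times a
  \<open>k\<close>-th power of \<open>F\<close>. Hence representing each coordinate by \<open>s\<close> \<open>k\<close>-th powers represents
  every element of \<open>E\<close> by \<open>b s\<close> \<open>K\<close>-th powers. Conversely, if an element of \<open>F\<close> is a sum of
  \<open>S\<close> \<open>K\<close>-th powers, sorting the terms by their coordinate, some coordinate receives at most
  \<open>S div b\<close> terms, and these represent the element in \<open>F\<close>.

  The embedding of \<open>F\<close> into \<open>E\<close> is constructed: for a generator \<open>\<eta>'\<close> of \<open>F\<^sup>*\<close>,
  \<open>F \<cong> \<int>[X] / (p, M)\<close> for an integer polynomial \<open>M\<close> of degree \<open>a\<close>, and \<open>M\<close> has a root in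
  \<open>E\<close> because it divides \<open>X ^ q - X\<close>, which has \<open>q\<close> roots in \<open>E\<close>.\<close>

section \<open>Multiplicative groups of finite fields\<close>

abbreviation class_ring :: "'a :: {times,plus,one,zero} ring" where
  "class_ring \<equiv> \<lparr>carrier = UNIV, mult = (*), one = 1, zero = 0, add = (+)\<rparr>"

lemma field_class_ring: "field (class_ring :: 'a :: field ring)"
proof -
  have [simp]: "\<exists>y. x + y = 0" for x :: 'a by (rule exI[of _ "-x"]) auto
  have [simp]: "x \<noteq> 0 \<Longrightarrow> \<exists>y. y * x = 1 \<and> x * y = 1" for x :: 'a
    by (intro exI[of _ "inverse x"]) auto
  have [simp]: "x \<noteq> 0 \<Longrightarrow> \<exists>y. x * y = 1" for x :: 'a
    by (intro exI[of _ "inverse x"]) auto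
  show ?thesis
    by unfold_locales (auto simp: Units_def field_simps)
qed

lemma class_ring_pow: "x [^]\<^bsub>(class_ring :: 'a :: field ring)\<^esub> (n::nat) = x ^ n"
  by (induct n) (auto simp: mult.commute)

lemma finite_field_cyclic:
  "\<exists>g::'a::{finite,field}. g \<noteq> 0 \<and> (\<forall>x. x \<noteq> 0 \<longrightarrow> (\<exists>i. x = g ^ i))"
proof -
  have "\<exists>g\<in>UNIV - {0::'a}. UNIV - {0} = {y. \<exists>i::nat. y = g [^]\<^bsub>(class_ring::'a ring)\<^esub> i}"
    using field.finite_field_mult_group_has_gen[OF field_class_ring[where 'a='a]] by simp
  then show ?thesis by (auto simp: class_ring_pow set_eq_iff)
qed

lemma CHAR_finite_field:
  assumes "prime p" "card (UNIV :: 'a::{finite,field} set) = p ^ n"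
  shows "CHAR('a) = p"
proof -
  have "prime CHAR('a)"
    by (rule prime_CHAR_semidom) (simp add: finite_imp_CHAR_pos)
  moreover have "CHAR('a) dvd p ^ n"
    using CHAR_dvd_CARD[where 'a='a] assms(2) by simp
  ultimately show ?thesis
    using assms(1) by (metis prime_dvd_power prime_nat_iff prime_gt_1_nat less_irrefl)
qed

lemma finite_field_power_card_minus_1:
  fixes x :: "'a :: {finite,field}"
  assumes "x \<noteq> 0"
  shows "x ^ (card (UNIV :: 'a set) - 1) = 1"
proof -
  have card: "card (UNIV - {0::'a}) = card (UNIV :: 'a set) - 1"
    by (simp add: card_Diff_singleton)
  have "x ^ (card (UNIV :: 'a set) - 1) * \<Prod>(UNIV - {0}) = (\<Prod>y\<in>UNIV - {0}. x * y)"
    by (simp add: prod.distrib card)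
  also have "\<dots> = 1 * \<Prod>(UNIV - {0::'a})"
    by (simp, rule prod.reindex_bij_witness[of _ "\<lambda>y. y / x" "\<lambda>y. x * y"]) (use assms in auto)
  finally show ?thesis
    by (metis mult_cancel_right prod_zero_iff finite_UNIV finite_Diff DiffE singletonI)
qed

lemma finite_field_power_card:
  fixes x :: "'a :: {finite,field}"
  shows "x ^ card (UNIV :: 'a set) = x"
proof (cases "x = 0")
  case False
  have "card (UNIV :: 'a set) = Suc (card (UNIV :: 'a set) - 1)"
    using finite_UNIV_card_ge_0[where 'a='a] by simp
  then show ?thesis
    using finite_field_power_card_minus_1[OF False] by (metis power_Suc mult_1_right)
qed (simp add: finite_UNIV_card_ge_0)

definition has_order :: "'a::monoid_mult \<Rightarrow> nat \<Rightarrow> bool" where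
  "has_order x n \<longleftrightarrow> 0 < n \<and> x ^ n = 1 \<and> inj_on (\<lambda>i. x ^ i) {..<n}"

lemma has_order_power_mod:
  assumes "has_order x n"
  shows "x ^ m = x ^ (m mod n)"
proof -
  have "x ^ m = x ^ (n * (m div n) + m mod n)"
    by simp
  also have "\<dots> = (x ^ n) ^ (m div n) * x ^ (m mod n)"
    by (simp only: power_add power_mult)
  finally show ?thesis
    using assms by (simp add: has_order_def)
qed

lemma has_order_power_eq_iff:
  assumes "has_order x n"
  shows "x ^ i = x ^ j \<longleftrightarrow> i mod n = j mod n"
proof -
  have "x ^ i = x ^ j \<longleftrightarrow> x ^ (i mod n) = x ^ (j mod n)"
    using has_order_power_mod[OF assms] by metis
  also have "\<dots> \<longleftrightarrow> i mod n = j mod n"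
    using assms by (auto simp: has_order_def inj_on_def)
  finally show ?thesis .
qed

lemma has_order_power:
  assumes "has_order x N" "m * n = N" "0 < n"
  shows "has_order (x ^ m) n"
proof -
  have "0 < m"
    using assms by (auto simp: has_order_def)
  have "inj_on (\<lambda>i. (x ^ m) ^ i) {..<n}"
  proof (rule inj_onI)
    fix i j
    assume ij: "i \<in> {..<n}" "j \<in> {..<n}" "(x ^ m) ^ i = (x ^ m) ^ j"
    then have "x ^ (m * i) = x ^ (m * j)"
      by (simp add: power_mult)
    moreover have "m * i < N" "m * j < N"
      using ij assms \<open>0 < m\<close> by auto
    ultimately have "m * i = m * j"
      using has_order_power_eq_iff[OF assms(1)] by simp
    then show "i = j"
      using \<open>0 < m\<close> by simp
  qed
  moreover have "(x ^ m) ^ n = 1"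
    using assms(1,2) by (simp add: has_order_def flip: power_mult)
  ultimately show ?thesis
    using assms(3) by (simp add: has_order_def)
qed

lemma finite_field_generator:
  obtains g :: "'a::{finite,field}"
  where "has_order g (card (UNIV::'a set) - 1)" "\<And>x. x \<noteq> 0 \<Longrightarrow> \<exists>i. x = g ^ i"
proof -
  define N where "N = card (UNIV::'a set) - 1"
  obtain g :: 'a where "g \<noteq> 0" and gen: "\<And>x. x \<noteq> 0 \<Longrightarrow> \<exists>i. x = g ^ i"
    using finite_field_cyclic by blast
  have card_units: "card (UNIV - {0::'a}) = N"
    by (simp add: N_def card_Diff_singleton)
  have "card {0, 1::'a} \<le> card (UNIV::'a set)"
    by (rule card_mono) auto
  then have "N > 0"
    by (simp add: N_def)
  have "inj_on (\<lambda>i. g ^ i) {..<N}"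
  proof (rule ccontr)
    assume "\<not> inj_on (\<lambda>i. g ^ i) {..<N}"
    then obtain i j where ij: "i < j" "j < N" "g ^ i = g ^ j"
      unfolding inj_on_def by (metis lessThan_iff linorder_neqE_nat)
    define d where "d = j - i"
    have "i + d = j"
      using ij by (simp add: d_def)
    then have "g ^ i * g ^ d = g ^ i * 1"
      using ij by (metis power_add mult_1_right)
    then have "g ^ d = 1"
      using \<open>g \<noteq> 0\<close> by simp
    \<comment> \<open>then every unit is among \<open>g ^ 0, \<dots>, g ^ (d - 1)\<close>, which are fewer than \<open>N\<close>\<close>
    have "UNIV - {0} \<subseteq> (\<lambda>i. g ^ i) ` {..<d}"
    proof
      fix x :: 'a
      assume "x \<in> UNIV - {0}"
      then obtain m where "x = g ^ m"
        using gen by auto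
      also have "\<dots> = (g ^ d) ^ (m div d) * g ^ (m mod d)"
        by (subst div_mult_mod_eq[of m d, symmetric]) (simp only: power_add power_mult mult.commute)
      finally show "x \<in> (\<lambda>i. g ^ i) ` {..<d}"
        using \<open>g ^ d = 1\<close> ij by (auto simp: d_def)
    qed
    then have "card (UNIV - {0::'a}) \<le> card ((\<lambda>i. g ^ i) ` {..<d})"
      by (intro card_mono) auto
    also have "\<dots> \<le> d"
      using card_image_le[of "{..<d}" "\<lambda>i. g ^ i"] by simp
    finally show False
      using ij card_units by (simp add: d_def)
  qed
  moreover have "g ^ N = 1"
    unfolding N_def by (rule finite_field_power_card_minus_1[OF \<open>g \<noteq> 0\<close>])
  ultimately have "has_order g N"
    using \<open>N > 0\<close> by (simp add: has_order_def)
  then show ?thesis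
    using that gen unfolding N_def by blast
qed

lemma has_order_power_power_inj:
  assumes "has_order z n" "coprime n r" "0 < r"
    and primitive: "\<And>t. 1 \<le> t \<Longrightarrow> t < m \<Longrightarrow> \<not> n dvd r ^ t - 1"
  shows "inj_on (\<lambda>i. z ^ (r ^ i)) {..<m}"
proof -
  have False if ij: "i < j" "j < m" "z ^ (r ^ i) = z ^ (r ^ j)" for i j
  proof -
    have "r ^ i \<le> r ^ j"
      using ij assms(3) by (simp add: power_increasing)
    moreover have "r ^ j mod n = r ^ i mod n"
      using ij has_order_power_eq_iff[OF assms(1)] by metis
    ultimately have "n dvd r ^ j - r ^ i"
      by (simp add: mod_eq_dvd_iff_nat)
    also have "r ^ j - r ^ i = r ^ i * (r ^ (j - i) - 1)"
      using ij by (simp add: diff_mult_distrib2 flip: power_add)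
    finally have "n dvd r ^ (j - i) - 1"
      using assms(2) by (metis coprime_dvd_mult_right_iff coprime_power_right_iff)
    moreover have "1 \<le> j - i" "j - i < m"
      using ij by auto
    ultimately show False
      using primitive by blast
  qed
  then show ?thesis
    unfolding inj_on_def by (metis lessThan_iff linorder_neqE_nat)
qed

lemma roots_of_unity_poly:
  assumes "0 < n"
  shows "finite {y :: 'a::idom. y ^ n = 1} \<and> card {y :: 'a. y ^ n = 1} \<le> n"
proof -
  define P :: "'a poly" where "P = monom 1 n - 1"
  have "coeff P n = 1"
    using assms by (simp add: P_def coeff_monom)
  then have "P \<noteq> 0"
    by auto
  moreover have "degree P \<le> n"
    unfolding P_def by (rule degree_diff_le) (simp_all add: degree_monom_le)
  moreover have "{y. y ^ n = 1} = {y. poly P y = 0}"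
    by (simp add: P_def poly_monom)
  ultimately show ?thesis
    using card_poly_roots_bound[of P] poly_roots_finite[of P] by simp
qed

lemma roots_of_unity_eq_powers:
  fixes \<omega> :: "'a::idom"
  assumes "has_order \<omega> n"
  shows "{y. y ^ n = 1} = (\<lambda>i. \<omega> ^ i) ` {..<n}"
proof -
  have n: "0 < n" "\<omega> ^ n = 1" "inj_on (\<lambda>i. \<omega> ^ i) {..<n}"
    using assms by (auto simp: has_order_def)
  have "(\<omega> ^ i) ^ n = 1" for i
    by (metis n(2) power_mult mult.commute power_one)
  then have sub: "(\<lambda>i. \<omega> ^ i) ` {..<n} \<subseteq> {y. y ^ n = 1}"
    by auto
  have "card ((\<lambda>i. \<omega> ^ i) ` {..<n}) = n"
    using n(3) by (simp add: card_image)
  then show ?thesis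
    using roots_of_unity_poly[OF n(1), where 'a='a] sub
    by (metis card_seteq)
qed

lemma range_power_eq_roots_of_unity:
  fixes \<omega> :: "'a::idom"
  assumes "has_order \<omega> n"
  shows "range (\<lambda>i. \<omega> ^ i) = {y. y ^ n = 1}"
proof -
  have "\<omega> ^ i \<in> (\<lambda>i. \<omega> ^ i) ` {..<n}" for i
  proof -
    have "i mod n < n"
      using assms by (simp add: has_order_def)
    then show ?thesis
      using has_order_power_mod[OF assms, of i] by blast
  qed
  then have "range (\<lambda>i. \<omega> ^ i) = (\<lambda>i. \<omega> ^ i) ` {..<n}"
    by blast
  then show ?thesis
    using roots_of_unity_eq_powers[OF assms] by simp
qed

section \<open>Independence of Frobenius conjugates\<close>

lemma of_nat_power_CHAR:
  assumes "prime CHAR('a::comm_ring_1)"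
  shows "(of_nat m :: 'a) ^ CHAR('a) = of_nat m"
proof (induct m)
  case 0
  then show ?case
    using assms by (simp add: zero_power prime_gt_0_nat)
next
  case (Suc m)
  have "(of_nat (Suc m) :: 'a) ^ CHAR('a) = (1 + of_nat m) ^ CHAR('a)"
    by simp
  also have "\<dots> = 1 + of_nat m"
    using freshmans_dream[OF assms refl] Suc by simp
  finally show ?case
    by simp
qed

lemma of_int_power_CHAR:
  assumes "prime CHAR('a::comm_ring_1)"
  shows "(of_int z :: 'a) ^ CHAR('a) = of_int z"
proof (cases "z \<ge> 0")
  case True
  then show ?thesis
    using of_nat_power_CHAR[OF assms, of "nat z"] by simp
next
  case False
  then have "(of_int z :: 'a) = - of_nat (nat (- z))"
    by simp
  then show ?thesis
    using minus_power_prime_CHAR[OF refl assms] of_nat_power_CHAR[OF assms] by simp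
qed

text \<open>As its coefficients are fixed by \<open>x \<mapsto> x ^ r\<close>, the roots of \<open>\<Sum>j<n. c j * X ^ j\<close>
  are closed under this ring endomorphism; so the \<open>z ^ r ^ i\<close> would be \<open>n\<close> distinct roots of
  a polynomial of degree \<open>< n\<close>.\<close>

lemma frobenius_conjugates_independent:
  fixes c :: "nat \<Rightarrow> 'a::field"
  assumes char: "prime CHAR('a)" and r: "r = CHAR('a) ^ m"
    and fixed: "\<And>j. j < n \<Longrightarrow> c j ^ r = c j"
    and inj: "inj_on (\<lambda>i. z ^ (r ^ i)) {..<n}"
    and zero: "(\<Sum>j<n. c j * z ^ j) = 0"
    and "j < n"
  shows "c j = 0"
proof -
  define P where "P = (\<Sum>j<n. monom (c j) j)"
  have coeff_P: "coeff P i = (if i < n then c i else 0)" for i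
    by (simp add: P_def coeff_sum coeff_monom)
  have poly_P: "poly P w = (\<Sum>j<n. c j * w ^ j)" for w
    by (simp add: P_def poly_sum poly_monom)
  have poly_P_power: "poly P (w ^ r) = poly P w ^ r" for w
  proof -
    have "poly P w ^ r = (\<Sum>j<n. (c j * w ^ j) ^ r)"
      unfolding poly_P by (rule freshmans_dream_sum'[OF char r])
    also have "\<dots> = (\<Sum>j<n. c j * (w ^ r) ^ j)"
      by (intro sum.cong refl) (simp add: power_mult_distrib fixed flip: power_mult,
          simp add: mult.commute)
    finally show ?thesis
      by (simp add: poly_P)
  qed
  have roots: "poly P (z ^ (r ^ i)) = 0" for i
  proof (induct i)
    case 0
    then show ?case
      using zero by (simp add: poly_P)
  next
    case (Suc i)
    have "r > 0"
      using char r by (simp add: prime_gt_0_nat)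
    have "z ^ (r ^ Suc i) = (z ^ (r ^ i)) ^ r"
      by (simp only: power_Suc2 power_mult)
    then have "poly P (z ^ (r ^ Suc i)) = poly P (z ^ (r ^ i)) ^ r"
      by (simp only: poly_P_power)
    then show ?case
      using Suc \<open>r > 0\<close> by simp
  qed
  have "P = 0"
  proof (rule ccontr)
    assume "P \<noteq> 0"
    then have "n > 0"
      by (cases n) (auto simp: P_def)
    have "(\<lambda>i. z ^ (r ^ i)) ` {..<n} \<subseteq> {x. poly P x = 0}"
      using roots by auto
    then have "card ((\<lambda>i. z ^ (r ^ i)) ` {..<n}) \<le> card {x. poly P x = 0}"
      by (intro card_mono poly_roots_finite \<open>P \<noteq> 0\<close>)
    then have "n \<le> card {x. poly P x = 0}"
      using card_image[OF inj] by simp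
    also have "\<dots> \<le> degree P"
      by (rule card_poly_roots_bound[OF \<open>P \<noteq> 0\<close>])
    also have "degree P \<le> n - 1"
      by (rule degree_le) (auto simp: coeff_P)
    finally show False
      using \<open>n > 0\<close> by simp
  qed
  then show ?thesis
    using coeff_P[of j] \<open>j < n\<close> by simp
qed

lemma frobenius_conjugates_independent_int:
  fixes \<eta> :: "'a::field"
  assumes "prime p" "CHAR('a) = p"
    and inj: "inj_on (\<lambda>i. \<eta> ^ (p ^ i)) {..<a}"
    and zero: "(\<Sum>i<a. of_int (c i) * \<eta> ^ i) = 0"
    and "i < a"
  shows "int p dvd c i"
proof -
  have "(of_int (c i) :: 'a) = 0"
    by (rule frobenius_conjugates_independent[where r=p and m=1, OF _ _ _ inj zero \<open>i < a\<close>])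
      (use assms of_int_power_CHAR in auto)
  then show ?thesis
    using assms(2) by (simp add: of_int_eq_0_iff_char_dvd)
qed

lemma finite_field_power_basis:
  fixes \<eta> :: "'a::{finite,field}"
  assumes p: "prime p" and card: "card (UNIV::'a set) = p ^ a"
    and inj: "inj_on (\<lambda>i. \<eta> ^ (p ^ i)) {..<a}"
  shows "\<exists>n. (\<forall>i<a. n i < p) \<and> y = (\<Sum>i<a. of_nat (n i) * \<eta> ^ i)"
proof -
  define L where "L n = (\<Sum>i<a. of_nat (n i) * \<eta> ^ i)" for n :: "nat \<Rightarrow> nat"
  define D where "D = PiE {..<a} (\<lambda>_. {..<p})"
  have char: "CHAR('a) = p"
    by (rule CHAR_finite_field[OF p card])
  have "inj_on L D"
  proof (rule inj_onI)
    fix n m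
    assume n: "n \<in> D" and m: "m \<in> D" and "L n = L m"
    then have "(\<Sum>i<a. of_int (int (n i) - int (m i)) * \<eta> ^ i) = (0::'a)"
      by (simp add: L_def sum_subtractf algebra_simps)
    then have dvd: "int p dvd int (n i) - int (m i)" if "i < a" for i
      using frobenius_conjugates_independent_int[OF p char inj, of "\<lambda>i. int (n i) - int (m i)"] that
      by blast
    show "n = m"
    proof (rule PiE_ext[OF n[unfolded D_def] m[unfolded D_def]])
      fix i
      assume "i \<in> {..<a}"
      then have "n i < p" "m i < p" "int p dvd int (n i) - int (m i)"
        using n m dvd by (auto simp: D_def)
      moreover have "\<bar>int (n i) - int (m i)\<bar> < int p"
        using calculation by linarith
      ultimately show "n i = m i"
        using dvd_imp_le_int[of "int (n i) - int (m i)" "int p"] by linarith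
    qed
  qed
  moreover have "card D = p ^ a"
    by (simp add: D_def card_PiE)
  ultimately have "L ` D = UNIV"
    using card by (intro card_eq_UNIV_imp_eq_UNIV) (simp_all add: card_image)
  then obtain n where "n \<in> D" "y = L n"
    by (metis UNIV_I imageE)
  then show ?thesis
    by (auto simp: D_def L_def)
qed

section \<open>Embedding a finite field into a larger one\<close>

lemma power_minus_1_dvd_power_minus_1:
  assumes "a dvd m"
  shows "(x::nat) ^ a - 1 dvd x ^ m - 1"
proof (cases "x = 0")
  case False
  obtain d where "m = a * d"
    using assms by blast
  have "[x ^ a = 1] (mod x ^ a - 1)"
    using False by (simp add: cong_altdef_nat)
  then have "[(x ^ a) ^ d = 1] (mod x ^ a - 1)"
    using cong_pow by fastforce
  then show ?thesis
    using \<open>m = a * d\<close> cong_to_1_nat by (simp add: power_mult)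
qed (simp add: power_0_left)

lemma coprime_if_dvd_power_minus_1:
  fixes d p :: nat
  assumes "d dvd p ^ a - 1" "0 < a" "0 < p"
  shows "coprime d p"
proof (rule coprimeI)
  fix g
  assume "g dvd d" "g dvd p"
  then have "g dvd p ^ a" "g dvd p ^ a - 1"
    using assms by (auto intro: dvd_trans)
  then have "g dvd p ^ a - (p ^ a - 1)"
    by (rule dvd_diff_nat)
  moreover have "p ^ a - (p ^ a - 1) = 1"
    using \<open>0 < p\<close> by simp
  ultimately show "is_unit g"
    by simp
qed

lemma card_frobenius_fixed_points:
  fixes q :: nat
  assumes "1 < q" "q - 1 dvd card (UNIV :: 'a::{finite,field} set) - 1"
  shows "card {y :: 'a. y ^ q = y} = q"
proof -
  obtain G :: 'a where G: "has_order G (card (UNIV::'a set) - 1)"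
    by (rule finite_field_generator)
  obtain e where "card (UNIV::'a set) - 1 = (q - 1) * e"
    using assms(2) by (rule dvdE)
  then have e: "e * (q - 1) = card (UNIV::'a set) - 1"
    by simp
  have \<omega>: "has_order (G ^ e) (q - 1)"
    by (rule has_order_power[OF G e]) (use assms in simp)
  have "G ^ e \<noteq> 0"
  proof
    assume "G ^ e = 0"
    then have "(G ^ e) ^ (q - 1) = 0"
      using assms(1) by simp
    moreover have "(G ^ e) ^ (q - 1) = 1"
      using \<omega> by (simp add: has_order_def)
    ultimately show False
      using zero_neq_one by metis
  qed
  have "y ^ q = y \<longleftrightarrow> y = 0 \<or> y ^ (q - 1) = 1" for y :: 'a
  proof -
    have "y ^ q = y * y ^ (q - 1)"
      using assms(1) by (simp flip: power_Suc)
    then show ?thesis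
      using assms(1) by auto
  qed
  then have "{y :: 'a. y ^ q = y} = insert 0 {y. y ^ (q - 1) = 1}"
    by auto
  also have "\<dots> = insert 0 ((\<lambda>i. (G ^ e) ^ i) ` {..<q - 1})"
    using roots_of_unity_eq_powers[OF \<omega>] by simp
  also have "card \<dots> = Suc (q - 1)"
  proof -
    have "0 \<notin> (\<lambda>i. (G ^ e) ^ i) ` {..<q - 1}"
      using \<open>G ^ e \<noteq> 0\<close> by (simp add: image_iff)
    moreover have "card ((\<lambda>i. (G ^ e) ^ i) ` {..<q - 1}) = q - 1"
      using \<omega> by (simp add: has_order_def card_image)
    ultimately show ?thesis
      by simp
  qed
  finally show ?thesis
    using assms(1) by simp
qed

lemma factor_has_root_if_roots_fill_degree:
  fixes P U :: "'a::idom poly"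
  assumes "P * U = R" "R \<noteq> 0" "degree R \<le> card {y. poly R y = 0}" "0 < degree P"
  shows "\<exists>y. poly P y = 0"
proof (rule ccontr)
  assume no_root: "\<nexists>y. poly P y = 0"
  have "P \<noteq> 0" "U \<noteq> 0"
    using assms(1,2) by auto
  have "{y. poly R y = 0} \<subseteq> {y. poly U y = 0}"
    using assms(1) no_root by auto
  then have "card {y. poly R y = 0} \<le> card {y. poly U y = 0}"
    by (intro card_mono poly_roots_finite \<open>U \<noteq> 0\<close>)
  also have "\<dots> \<le> degree U"
    by (rule card_poly_roots_bound[OF \<open>U \<noteq> 0\<close>])
  also have "degree U < degree R"
    using assms(1,4) degree_mult_eq[OF \<open>P \<noteq> 0\<close> \<open>U \<noteq> 0\<close>] by simp
  finally show False
    using assms(3) by simp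
qed

lemma map_poly_of_int_add:
  "map_poly of_int (f + g) = (map_poly of_int f + map_poly of_int g :: 'a::comm_ring_1 poly)"
  by (rule poly_eqI) (simp add: coeff_map_poly)

lemma map_poly_of_int_diff:
  "map_poly of_int (f - g) = (map_poly of_int f - map_poly of_int g :: 'a::comm_ring_1 poly)"
  by (rule poly_eqI) (simp add: coeff_map_poly)

lemma map_poly_of_int_mult:
  "map_poly of_int (f * g) = (map_poly of_int f * map_poly of_int g :: 'a::comm_ring_1 poly)"
  by (rule poly_eqI) (simp add: coeff_map_poly coeff_mult of_int_sum)

lemma poly_map_poly_of_int_monom_sum:
  "poly (map_poly of_int (\<Sum>i<n. monom (f i) i)) (x::'a::comm_ring_1) = (\<Sum>i<n. of_int (f i) * x ^ i)"
  by (induct n) (simp_all add: map_poly_of_int_add map_poly_monom poly_monom)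

lemma map_poly_of_int_eq_0_if_CHAR_dvd:
  assumes "\<And>i. int CHAR('a) dvd coeff f i"
  shows "(map_poly of_int f :: 'a::comm_ring_1 poly) = 0"
  by (rule poly_eqI) (use assms in \<open>simp add: coeff_map_poly of_int_eq_0_iff_char_dvd\<close>)

lemma ring_hom_from_presentation:
  fixes \<eta> :: "'a::comm_ring_1" and \<theta> :: "'b::comm_ring_1"
  assumes gen: "\<And>y. \<exists>f. poly (map_poly of_int f) \<eta> = y"
    and vanish: "\<And>f. poly (map_poly of_int f) \<eta> = 0 \<Longrightarrow> poly (map_poly of_int f) \<theta> = 0"
  obtains \<phi> :: "'a \<Rightarrow> 'b"
  where "\<And>x y. \<phi> (x + y) = \<phi> x + \<phi> y" "\<And>x y. \<phi> (x * y) = \<phi> x * \<phi> y" "\<phi> 1 = 1"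
proof -
  define \<phi> where "\<phi> y = poly (map_poly of_int (SOME f. poly (map_poly of_int f) \<eta> = y)) \<theta>" for y
  have \<phi>_eq: "\<phi> y = poly (map_poly of_int f) \<theta>" if f: "poly (map_poly of_int f) \<eta> = y" for f y
  proof -
    define g where "g = (SOME f. poly (map_poly of_int f) \<eta> = y)"
    have "poly (map_poly of_int g) \<eta> = y"
      using someI_ex[OF gen[of y]] by (simp add: g_def)
    then have "poly (map_poly of_int (g - f)) \<eta> = 0"
      using f by (simp add: map_poly_of_int_diff)
    then have "poly (map_poly of_int (g - f)) \<theta> = 0"
      by (rule vanish)
    then show ?thesis
      by (simp add: \<phi>_def g_def[symmetric] map_poly_of_int_diff)
  qed
  show ?thesis
  proof (rule that)
    fix x y
    obtain f g where f: "poly (map_poly of_int f) \<eta> = x" and g: "poly (map_poly of_int g) \<eta> = y"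
      using gen by metis
    show "\<phi> (x + y) = \<phi> x + \<phi> y"
      using \<phi>_eq[of "f + g"] \<phi>_eq[OF f] \<phi>_eq[OF g] f g by (simp add: map_poly_of_int_add)
    show "\<phi> (x * y) = \<phi> x * \<phi> y"
      using \<phi>_eq[of "f * g"] \<phi>_eq[OF f] \<phi>_eq[OF g] f g by (simp add: map_poly_of_int_mult)
  next
    show "\<phi> 1 = 1"
      using \<phi>_eq[of 1 1] by simp
  qed
qed

lemma poly_eq_sum_lessThan:
  fixes P :: "'a::comm_semiring_1 poly"
  assumes "degree P < n"
  shows "poly P x = (\<Sum>i<n. coeff P i * x ^ i)"
proof -
  have "poly P x = (\<Sum>i\<le>degree P. coeff P i * x ^ i)"
    by (rule poly_altdef)
  also have "\<dots> = (\<Sum>i<n. coeff P i * x ^ i)"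
    by (rule sum.mono_neutral_left) (use assms in \<open>auto simp: coeff_eq_0\<close>)
  finally show ?thesis .
qed

text \<open>An integer polynomial \<open>M\<close> whose reduction mod \<open>p\<close> generates the ideal of relations of
  \<open>\<eta>\<close>; it comes from expressing \<open>\<eta> ^ a\<close> in the basis \<open>1, \<eta>, \<dots>, \<eta> ^ (a - 1)\<close>.\<close>

lemma int_poly_presentation:
  fixes \<eta> :: "'a::{finite,field}"
  assumes p: "prime p" and card: "card (UNIV::'a set) = p ^ a"
    and inj: "inj_on (\<lambda>i. \<eta> ^ (p ^ i)) {..<a}"
  obtains M :: "int poly"
  where "degree M = a" "lead_coeff M = 1" "poly (map_poly of_int M) \<eta> = 0"
    "\<And>f. poly (map_poly of_int f) \<eta> = 0 \<Longrightarrow> \<exists>u r. f = M * u + r \<and> (\<forall>i. int p dvd coeff r i)"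
proof -
  obtain n where n: "\<eta> ^ a = (\<Sum>i<a. of_nat (n i) * \<eta> ^ i)"
    using finite_field_power_basis[OF p card inj] by blast
  define M :: "int poly" where "M = monom 1 a - (\<Sum>i<a. monom (int (n i)) i)"
  have coeff_M: "coeff M i = (if i = a then 1 else 0) - (if i < a then int (n i) else 0)" for i
    by (simp add: M_def coeff_sum coeff_monom)
  have deg: "degree M = a"
  proof (rule antisym)
    show "degree M \<le> a"
      by (rule degree_le) (simp add: coeff_M)
    show "a \<le> degree M"
      by (rule le_degree) (simp add: coeff_M)
  qed
  then have lead: "lead_coeff M = 1"
    by (simp add: coeff_M)
  have root: "poly (map_poly of_int M) \<eta> = 0"
    by (simp add: M_def map_poly_of_int_diff map_poly_monom poly_monom
        poly_map_poly_of_int_monom_sum n)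
  have "\<exists>u r. f = M * u + r \<and> (\<forall>i. int p dvd coeff r i)"
    if f: "poly (map_poly of_int f) \<eta> = 0" for f
  proof -
    obtain u r where "pseudo_divmod f M = (u, r)"
      by (cases "pseudo_divmod f M") auto
    moreover have "M \<noteq> 0"
      using lead by auto
    ultimately have "f = M * u + r" "r = 0 \<or> degree r < degree M"
      using pseudo_divmod[of M f u r] lead by simp_all
    then
    have fr: "f = M * u + r" and r: "r = 0 \<or> degree r < a"
      using deg by auto
    have "poly (map_poly of_int r) \<eta> = 0"
      using f root by (simp add: fr map_poly_of_int_add map_poly_of_int_mult)
    have "int p dvd coeff r i" for i
    proof (cases "r = 0 \<or> a \<le> i")
      case True
      then show ?thesis
        using r by (auto simp: coeff_eq_0)
    next
      case False
      then have "degree (map_poly of_int r :: 'a poly) < a"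
        using r map_poly_degree_leq[of "of_int :: int \<Rightarrow> 'a" r] by linarith
      then have "(\<Sum>j<a. of_int (coeff r j) * \<eta> ^ j) = 0"
        using \<open>poly (map_poly of_int r) \<eta> = 0\<close> poly_eq_sum_lessThan[of _ a \<eta>]
        by (simp add: coeff_map_poly)
      then show ?thesis
        using frobenius_conjugates_independent_int[OF p CHAR_finite_field[OF p card] inj] False
        by simp
    qed
    then show ?thesis
      using fr by blast
  qed
  then show ?thesis
    using that deg lead root by blast
qed

theorem finite_field_embedding:
  fixes p a m :: nat
  assumes p: "prime p" and "0 < a" and "a dvd m"
    and card_F: "card (UNIV :: 'a set) = p ^ a"
    and card_E: "card (UNIV :: 'b set) = p ^ m"
  obtains \<phi> :: "'a::{finite,field} \<Rightarrow> 'b::{finite,field}"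
  where "\<And>x y. \<phi> (x + y) = \<phi> x + \<phi> y" "\<And>x y. \<phi> (x * y) = \<phi> x * \<phi> y" "\<phi> 1 = 1"
proof -
  define q where "q = p ^ a"
  have "1 < p"
    using p prime_gt_1_nat by blast
  then have "1 < q"
    unfolding q_def using \<open>0 < a\<close> by (rule one_less_power)
  obtain \<eta> :: 'a where \<eta>: "has_order \<eta> (q - 1)"
    using finite_field_generator[where 'a='a] card_F by (metis q_def)
  have "inj_on (\<lambda>i. \<eta> ^ (p ^ i)) {..<a}"
  proof (rule has_order_power_power_inj[OF \<eta>])
    show "coprime (q - 1) p"
      using coprime_if_dvd_power_minus_1[of "q - 1" p a] \<open>0 < a\<close> \<open>1 < p\<close> by (simp add: q_def)
    fix t
    assume "1 \<le> t" "t < a"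
    then have "p \<le> p ^ t" "p ^ t < q"
      using \<open>1 < p\<close> by (simp_all add: q_def self_le_power power_strict_increasing)
    then show "\<not> q - 1 dvd p ^ t - 1"
      using \<open>1 < p\<close> by (auto dest: dvd_imp_le)
  qed (use \<open>1 < p\<close> in simp)
  then obtain M :: "int poly" where deg_M: "degree M = a" and lead_M: "lead_coeff M = 1"
    and root_M: "poly (map_poly of_int M) \<eta> = 0"
    and kernel: "\<And>f. poly (map_poly of_int f) \<eta> = 0 \<Longrightarrow>
      \<exists>u r. f = M * u + r \<and> (\<forall>i. int p dvd coeff r i)"
    using int_poly_presentation[OF p card_F] by blast
  have CHAR_E: "CHAR('b) = p"
    by (rule CHAR_finite_field[OF p card_E])
  have transfer: "\<exists>u. (map_poly of_int f :: 'b poly) = map_poly of_int M * map_poly of_int u"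
    if f: "poly (map_poly of_int f) \<eta> = 0" for f
  proof -
    obtain u r where "f = M * u + r" "\<forall>i. int p dvd coeff r i"
      using kernel[OF f] by blast
    moreover from this have "(map_poly of_int r :: 'b poly) = 0"
      by (intro map_poly_of_int_eq_0_if_CHAR_dvd) (simp add: CHAR_E)
    ultimately show ?thesis
      by (auto simp: map_poly_of_int_add map_poly_of_int_mult)
  qed
  \<comment> \<open>\<open>M\<close> divides \<open>X ^ q - X\<close>, which splits into distinct linear factors over \<open>'b\<close>\<close>
  define R :: "int poly" where "R = monom 1 q - monom 1 1"
  have "poly (map_poly of_int R) \<eta> = 0"
    using finite_field_power_card[of \<eta>] card_F
    by (simp add: R_def map_poly_of_int_diff map_poly_monom poly_monom q_def)
  then obtain U where factor: "(map_poly of_int R :: 'b poly) = map_poly of_int M * U"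
    using transfer by blast
  have R_E: "(map_poly of_int R :: 'b poly) = monom 1 q - monom 1 1"
    by (simp add: R_def map_poly_of_int_diff map_poly_monom)
  have coeff_R_E: "coeff (map_poly of_int R :: 'b poly) i = (if i = q then 1 else 0) - (if i = 1 then 1 else 0)" for i
    by (simp add: R_E coeff_monom)
  have deg_R_E: "degree (map_poly of_int R :: 'b poly) = q"
  proof (rule antisym)
    show "degree (map_poly of_int R :: 'b poly) \<le> q"
      by (rule degree_le) (use \<open>1 < q\<close> in \<open>simp add: coeff_R_E\<close>)
    show "q \<le> degree (map_poly of_int R :: 'b poly)"
      by (rule le_degree) (use \<open>1 < q\<close> in \<open>simp add: coeff_R_E\<close>)
  qed
  have "{y. poly (map_poly of_int R :: 'b poly) y = 0} = {y. y ^ q = y}"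
    by (simp add: R_E poly_monom)
  moreover have "card {y :: 'b. y ^ q = y} = q"
    using card_frobenius_fixed_points[OF \<open>1 < q\<close>, where 'a='b] power_minus_1_dvd_power_minus_1[OF \<open>a dvd m\<close>, of p]
      card_E by (simp add: q_def)
  moreover have "degree (map_poly of_int M :: 'b poly) = a"
    using deg_M lead_M by (simp add: map_poly_degree_eq)
  ultimately obtain \<theta> :: 'b where \<theta>: "poly (map_poly of_int M) \<theta> = 0"
    using factor_has_root_if_roots_fill_degree[OF factor[symmetric]] deg_R_E \<open>0 < a\<close>
    by fastforce
  show ?thesis
  proof (rule ring_hom_from_presentation)
    fix y :: 'a
    obtain n where "y = (\<Sum>i<a. of_nat (n i) * \<eta> ^ i)"
      using finite_field_power_basis[OF p card_F \<open>inj_on _ _\<close>] by blast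
    then show "\<exists>f. poly (map_poly of_int f) \<eta> = y"
      by (intro exI[of _ "\<Sum>i<a. monom (int (n i)) i"]) (simp add: poly_map_poly_of_int_monom_sum)
  next
    fix f
    assume "poly (map_poly of_int f) \<eta> = 0"
    then show "poly (map_poly of_int f) \<theta> = 0"
      using transfer \<theta> by fastforce
  qed (use that in blast)
qed

section \<open>Sums from a set and Waring numbers\<close>

definition sums_of :: "'a::monoid_add set \<Rightarrow> nat \<Rightarrow> 'a set" where
  "sums_of P s = {sum_list ws | ws. set ws \<subseteq> P \<and> length ws = s}"

lemma waring_repr_iff_sums_of:
  "waring_repr TYPE('a::comm_semiring_1) k s \<longleftrightarrow> (\<forall>y::'a. y \<in> sums_of (range (\<lambda>x. x ^ k)) s)"
proof -
  have "(\<exists>xs. length xs = s \<and> y = (\<Sum>x\<leftarrow>xs. x ^ k)) \<longleftrightarrow>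
        (\<exists>ws. y = sum_list ws \<and> set ws \<subseteq> range (\<lambda>x. x ^ k) \<and> length ws = s)" for y :: 'a
  proof
    assume "\<exists>ws. y = sum_list ws \<and> set ws \<subseteq> range (\<lambda>x. x ^ k) \<and> length ws = s"
    then obtain ws where ws: "y = sum_list ws" "set ws \<subseteq> range (\<lambda>x. x ^ k)" "length ws = s"
      by blast
    then obtain xs where "ws = map (\<lambda>x. x ^ k) xs"
      using ex_map_conv[of ws "\<lambda>x. x ^ k"] by blast
    then show "\<exists>xs. length xs = s \<and> y = (\<Sum>x\<leftarrow>xs. x ^ k)"
      using ws by auto
  next
    assume "\<exists>xs. length xs = s \<and> y = (\<Sum>x\<leftarrow>xs. x ^ k)"
    then show "\<exists>ws. y = sum_list ws \<and> set ws \<subseteq> range (\<lambda>x. x ^ k) \<and> length ws = s"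
      by (metis (mono_tags, lifting) image_mono length_map list.set_map subset_UNIV)
  qed
  then show ?thesis
    by (simp add: waring_repr_def sums_of_def)
qed

lemma sums_of_0: "0 \<in> sums_of P 0"
  unfolding sums_of_def by (auto intro!: exI[of _ "[]"])

lemma sums_of_singleton: "u \<in> P \<Longrightarrow> u \<in> sums_of P 1"
  unfolding sums_of_def by (auto intro!: exI[of _ "[u]"])

lemma sums_of_add:
  assumes "x \<in> sums_of P s" "y \<in> sums_of P t"
  shows "x + y \<in> sums_of P (s + t)"
proof -
  obtain ws vs where "set ws \<subseteq> P" "length ws = s" "x = sum_list ws"
    "set vs \<subseteq> P" "length vs = t" "y = sum_list vs"
    using assms unfolding sums_of_def by auto
  then show ?thesis
    unfolding sums_of_def by (intro CollectI exI[of _ "ws @ vs"]) auto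
qed

lemma sums_of_mono:
  assumes "0 \<in> P" "y \<in> sums_of P s" "s \<le> t"
  shows "y \<in> sums_of P t"
proof -
  have "sum_list (replicate n 0) = (0::'a)" for n
    by (induct n) simp_all
  then have "0 \<in> sums_of P (t - s)"
    unfolding sums_of_def using assms(1) by (intro CollectI exI[of _ "replicate (t - s) 0"]) auto
  then show ?thesis
    using sums_of_add[OF assms(2)] assms(3) by fastforce
qed

lemma sums_of_sum:
  fixes y :: "nat \<Rightarrow> 'a::comm_monoid_add"
  assumes "\<And>j. j < n \<Longrightarrow> y j \<in> sums_of P (m j)"
  shows "(\<Sum>j<n. y j) \<in> sums_of P (\<Sum>j<n. m j)"
  using assms by (induct n) (auto simp: sums_of_0 intro: sums_of_add)

lemma sums_of_of_nat_mult:
  fixes u :: "'a::semiring_1"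
  assumes "u \<in> P"
  shows "of_nat m * u \<in> sums_of P m"
proof (induct m)
  case (Suc m)
  then show ?case
    using sums_of_add[OF sums_of_singleton[OF assms] Suc] by (simp add: algebra_simps)
qed (simp add: sums_of_0)

lemma sums_of_image:
  assumes "\<And>x y. f (x + y) = f x + f y" "f 0 = 0" "\<And>u. u \<in> P \<Longrightarrow> f u \<in> P'"
    and "y \<in> sums_of P s"
  shows "f y \<in> sums_of P' s"
proof -
  obtain ws where ws: "set ws \<subseteq> P" "length ws = s" "y = sum_list ws"
    using assms(4) unfolding sums_of_def by auto
  have "f (sum_list ws) = sum_list (map f ws)"
    by (induct ws) (simp_all add: assms(1,2))
  then show ?thesis
    unfolding sums_of_def using ws assms(3) by (intro CollectI exI[of _ "map f ws"]) auto
qed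

lemma exists_le_sum_div:
  fixes n :: "nat \<Rightarrow> nat"
  assumes "0 < b"
  shows "\<exists>j<b. n j \<le> (\<Sum>j<b. n j) div b"
proof (rule ccontr)
  define S where "S = (\<Sum>j<b. n j)"
  assume "\<not> (\<exists>j<b. n j \<le> (\<Sum>j<b. n j) div b)"
  then have "\<And>j. j \<in> {..<b} \<Longrightarrow> S div b + 1 \<le> n j"
    by (auto simp: S_def)
  then have "b * (S div b + 1) \<le> S"
    using sum_bounded_below[of "{..<b}" "S div b + 1" n] by (simp add: S_def)
  moreover have "S = b * (S div b) + S mod b" "S mod b < b"
    using assms by simp_all
  ultimately show False
    by (simp add: algebra_simps)
qed

text \<open>Models \<open>E = \<Oplus>\<^sub>j\<^sub><\<^sub>b z j \<phi>(F)\<close>, where \<open>A\<close> stands for the \<open>k\<close>-th powers of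
  \<open>F\<close> and \<open>B\<close> for the \<open>K\<close>-th powers of \<open>E\<close>.\<close>

locale coordinate_decomposition =
  fixes \<phi> :: "'a::ab_group_add \<Rightarrow> 'b::ring" and z :: "nat \<Rightarrow> 'b" and b :: nat
    and A :: "'a set" and B :: "'b set"
  assumes additive: "\<And>x y. \<phi> (x + y) = \<phi> x + \<phi> y"
    and b_pos: "0 < b"
    and coords_unique: "\<And>Y Y' j. (\<Sum>i<b. z i * \<phi> (Y i)) = (\<Sum>i<b. z i * \<phi> (Y' i)) \<Longrightarrow> j < b \<Longrightarrow> Y j = Y' j"
    and coords_exist: "\<And>x. \<exists>Y. x = (\<Sum>i<b. z i * \<phi> (Y i))"
    and zero_mem: "0 \<in> A"
    and B_eq: "B = {z j * \<phi> u | j u. j < b \<and> u \<in> A}"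
begin

definition combine :: "(nat \<Rightarrow> 'a) \<Rightarrow> 'b" where
  "combine Y = (\<Sum>i<b. z i * \<phi> (Y i))"

lemma zero [simp]: "\<phi> 0 = 0"
  using additive[of 0 0] by simp

lemma sums_of_extend:
  assumes "\<And>y. y \<in> sums_of A s"
  shows "x \<in> sums_of B (b * s)"
proof -
  obtain Y where "x = combine Y"
    using coords_exist by (auto simp: combine_def)
  have "z j * \<phi> (Y j) \<in> sums_of B s" if "j < b" for j
    by (rule sums_of_image[where P = A]) (use assms that in \<open>auto simp: additive algebra_simps B_eq\<close>)
  then have "combine Y \<in> sums_of B (\<Sum>j<b. s)"
    unfolding combine_def by (rule sums_of_sum)
  then show ?thesis
    using \<open>x = combine Y\<close> by (simp add: mult.commute)
qed

lemma sum_list_as_combine: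
  assumes "set ws \<subseteq> B"
  shows "\<exists>Y n. (\<forall>j<b. Y j \<in> sums_of A (n j)) \<and> (\<Sum>j<b. n j) = length ws \<and> sum_list ws = combine Y"
  using assms
proof (induct ws)
  case Nil
  show ?case
    by (intro exI[of _ "\<lambda>_. 0"]) (simp add: sums_of_0 combine_def)
next
  case (Cons w ws)
  then obtain Y n where Y: "\<forall>j<b. Y j \<in> sums_of A (n j)" and n: "(\<Sum>j<b. n j) = length ws"
    and ws: "sum_list ws = combine Y"
    by auto
  obtain j0 u where j0: "j0 < b" and u: "u \<in> A" and w: "w = z j0 * \<phi> u"
    using Cons.prems B_eq by auto
  define Y' where "Y' j = Y j + (if j = j0 then u else 0)" for j
  define n' where "n' j = n j + (if j = j0 then 1 else 0)" for j
  have "\<forall>j<b. Y' j \<in> sums_of A (n' j)"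
    using Y sums_of_add[OF _ sums_of_singleton[OF u]] by (auto simp: Y'_def n'_def)
  moreover have "(\<Sum>j<b. n' j) = length (w # ws)"
    using n j0 by (simp add: n'_def sum.distrib)
  moreover have "combine Y' = combine Y + w"
  proof -
    have "(\<Sum>j<b. z j * \<phi> (if j = j0 then u else 0)) = (\<Sum>j<b. if j = j0 then z j * \<phi> u else 0)"
      by (intro sum.cong) auto
    also have "\<dots> = z j0 * \<phi> u"
      using j0 by simp
    finally show ?thesis
      by (simp add: combine_def Y'_def additive distrib_left sum.distrib w)
  qed
  ultimately show ?case
    using ws by (metis add.commute sum_list.Cons)
qed

lemma sums_of_restrict:
  assumes "\<And>x. x \<in> sums_of B S"
  shows "y \<in> sums_of A (S div b)"
proof -
  obtain ws where ws: "set ws \<subseteq> B" "length ws = S" "combine (\<lambda>_. y) = sum_list ws"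
    using assms[of "combine (\<lambda>_. y)"] unfolding sums_of_def by blast
  obtain Y n where Y: "\<forall>j<b. Y j \<in> sums_of A (n j)" and n: "(\<Sum>j<b. n j) = S"
    and "sum_list ws = combine Y"
    using sum_list_as_combine[OF ws(1)] ws(2) by blast
  obtain j where j: "j < b" "n j \<le> S div b"
    using exists_le_sum_div[OF b_pos, of n] n by blast
  have "Y j = y"
    using coords_unique[of Y "\<lambda>_. y" j] \<open>sum_list ws = combine Y\<close> ws(3) j
    by (simp add: combine_def)
  then show ?thesis
    using Y j sums_of_mono[OF zero_mem] by blast
qed

end

theorem waring_number_of_coordinate_decomposition:
  fixes \<phi> :: "'a::comm_ring_1 \<Rightarrow> 'b::comm_ring_1"
  assumes "coordinate_decomposition \<phi> z b (range (\<lambda>x. x ^ k)) (range (\<lambda>x. x ^ K))"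
    and "waring_exists TYPE('a) k"
  shows "waring_exists TYPE('b) K \<and> waring_number TYPE('b) K = b * waring_number TYPE('a) k"
proof -
  interpret coordinate_decomposition \<phi> z b "range (\<lambda>x. x ^ k)" "range (\<lambda>x. x ^ K)"
    by fact
  have extend: "waring_repr TYPE('b) K (b * s)" if "waring_repr TYPE('a) k s" for s
    using that sums_of_extend by (simp add: waring_repr_iff_sums_of)
  have restrict: "waring_repr TYPE('a) k (S div b)" if "waring_repr TYPE('b) K S" for S
    using that sums_of_restrict by (simp add: waring_repr_iff_sums_of)
  define g where "g = waring_number TYPE('a) k"
  define G where "G = waring_number TYPE('b) K"
  have "waring_repr TYPE('a) k g"
    using assms(2) unfolding g_def waring_number_def waring_exists_def by (rule LeastI_ex)
  then have "waring_repr TYPE('b) K (b * g)"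
    by (rule extend)
  then have "waring_repr TYPE('b) K G" "G \<le> b * g"
    unfolding G_def waring_number_def by (auto intro: LeastI Least_le)
  then have "g \<le> G div b"
    unfolding g_def waring_number_def by (auto intro: Least_le restrict)
  then have "b * g \<le> b * (G div b)"
    by simp
  also have "\<dots> \<le> G"
    by (rule times_div_less_eq_dividend)
  finally have "G = b * g"
    using \<open>G \<le> b * g\<close> by simp
  then show ?thesis
    using \<open>waring_repr TYPE('b) K (b * g)\<close> by (auto simp: waring_exists_def G_def g_def)
qed

section \<open>Coordinates in an extension of finite fields\<close>

locale field_embedding =
  fixes \<phi> :: "'a::field \<Rightarrow> 'b::field"
  assumes add: "\<And>x y. \<phi> (x + y) = \<phi> x + \<phi> y"
    and mult: "\<And>x y. \<phi> (x * y) = \<phi> x * \<phi> y"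
    and one: "\<phi> 1 = 1"
begin

lemma zero [simp]: "\<phi> 0 = 0"
  using add[of 0 0] by (metis add_0 add_cancel_left_right)

lemma diff: "\<phi> (x - y) = \<phi> x - \<phi> y"
  using add[of "x - y" y] by (simp add: algebra_simps)

lemma power: "\<phi> (x ^ n) = \<phi> x ^ n"
  by (induct n) (simp_all add: one mult)

lemma inj: "inj \<phi>"
proof (rule injI)
  fix x y
  assume "\<phi> x = \<phi> y"
  then have "\<phi> (x - y) = 0"
    by (simp add: diff)
  show "x = y"
  proof (rule ccontr)
    assume "x \<noteq> y"
    then have "\<phi> (x - y) * \<phi> (inverse (x - y)) = 1"
      by (simp flip: mult one)
    then show False
      using \<open>\<phi> (x - y) = 0\<close> by simp
  qed
qed

lemma has_order_image: "has_order x n \<Longrightarrow> has_order (\<phi> x) n"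
  unfolding has_order_def using inj_on_subset[OF inj]
  by (auto simp: inj_on_def one simp flip: power dest: injD[OF inj])

end

lemma range_power_cyclic:
  fixes g :: "'a::field"
  assumes gen: "\<And>x. x \<noteq> 0 \<Longrightarrow> \<exists>i. x = g ^ i" and "0 < k"
  shows "range (\<lambda>x. x ^ k) = insert 0 (range (\<lambda>i. (g ^ k) ^ i))"
proof -
  have "x ^ k \<in> insert 0 (range (\<lambda>i. (g ^ k) ^ i))" for x
  proof (cases "x = 0")
    case False
    then obtain i where "x = g ^ i"
      using gen by blast
    then have "x ^ k = (g ^ k) ^ i"
      by (simp only: mult.commute flip: power_mult)
    then show ?thesis
      by blast
  qed (use \<open>0 < k\<close> in simp)
  moreover have "(g ^ k) ^ i \<in> range (\<lambda>x. x ^ k)" for i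
  proof -
    have "(g ^ k) ^ i = (g ^ i) ^ k"
      by (simp only: mult.commute flip: power_mult)
    then show ?thesis
      by blast
  qed
  moreover have "0 \<in> range (\<lambda>x::'a. x ^ k)"
    using \<open>0 < k\<close> by (intro range_eqI[of _ _ 0]) (simp add: zero_power)
  ultimately show ?thesis
    by blast
qed

lemma finite_field_range_power:
  assumes "k * c = card (UNIV :: 'a set) - 1" "0 < c"
  obtains \<eta> :: "'a::{finite,field}" where "has_order \<eta> c" "range (\<lambda>x. x ^ k) = insert 0 (range (\<lambda>i. \<eta> ^ i))"
proof -
  obtain g :: 'a where g: "has_order g (card (UNIV :: 'a set) - 1)"
    and gen: "\<And>x. x \<noteq> 0 \<Longrightarrow> \<exists>i. x = g ^ i"
    using finite_field_generator[where 'a='a] by blast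
  have "0 < k * c"
    using g assms(1) by (simp add: has_order_def)
  then have "0 < k"
    by simp
  show ?thesis
    by (rule that[OF has_order_power[OF g assms] range_power_cyclic[OF gen \<open>0 < k\<close>]])
qed

lemma primitive_divisor_conjugates_inj:
  assumes "0 < p" "0 < a" "primitive_divisor c p a" "has_order \<eta> c"
  shows "inj_on (\<lambda>i. \<eta> ^ (p ^ i)) {..<a}"
proof (rule has_order_power_power_inj[OF assms(4) _ assms(1)])
  show "coprime c p"
    using assms(1-3) coprime_if_dvd_power_minus_1 by (auto simp: primitive_divisor_def)
qed (use assms(3) in \<open>auto simp: primitive_divisor_def\<close>)

lemma primitive_divisor_power_base:
  assumes "primitive_divisor e p (a * b)" "0 < a"
  shows "primitive_divisor e (p ^ a) b"
proof -
  have "\<not> e dvd (p ^ a) ^ t - 1" if "1 \<le> t" "t < b" for t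
  proof -
    have "1 \<le> a * t" "a * t < a * b"
      using that assms(2) by auto
    then have "\<not> e dvd p ^ (a * t) - 1"
      using assms(1) by (simp add: primitive_divisor_def)
    then show ?thesis
      by (simp add: power_mult)
  qed
  then show ?thesis
    using assms(1) by (simp add: primitive_divisor_def power_mult)
qed

lemma waring_exists_if_power_basis_in_range:
  fixes \<eta> :: "'a::{finite,field}"
  assumes p: "prime p" and card: "card (UNIV::'a set) = p ^ a"
    and inj: "inj_on (\<lambda>i. \<eta> ^ (p ^ i)) {..<a}"
    and powers: "\<And>i. \<eta> ^ i \<in> range (\<lambda>x. x ^ k)" and "0 < k"
  shows "waring_exists TYPE('a) k"
proof -
  have "y \<in> sums_of (range (\<lambda>x. x ^ k)) (a * p)" for y :: 'a
  proof -
    obtain n where n: "\<forall>i<a. n i < p" and y: "y = (\<Sum>i<a. of_nat (n i) * \<eta> ^ i)"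
      using finite_field_power_basis[OF p card inj] by blast
    have "y \<in> sums_of (range (\<lambda>x. x ^ k)) (\<Sum>i<a. n i)"
      unfolding y by (intro sums_of_sum sums_of_of_nat_mult powers)
    moreover have "(\<Sum>i<a. n i) \<le> (\<Sum>i<a. p)"
      by (rule sum_mono) (use n in auto)
    moreover have "0 \<in> range (\<lambda>x::'a. x ^ k)"
      using \<open>0 < k\<close> by (intro range_eqI[of _ _ 0]) (simp add: zero_power)
    ultimately show ?thesis
      by (auto intro: sums_of_mono)
  qed
  then show ?thesis
    by (auto simp: waring_exists_def waring_repr_iff_sums_of)
qed

lemma (in field_embedding) coordinates_unique:
  assumes char: "prime CHAR('b)" and q: "q = CHAR('b) ^ m" and fixed: "\<And>x::'a. x ^ q = x"
    and conjugates: "inj_on (\<lambda>i. \<zeta> ^ (q ^ i)) {..<b}"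
    and eq: "(\<Sum>i<b. \<zeta> ^ i * \<phi> (Y i)) = (\<Sum>i<b. \<zeta> ^ i * \<phi> (Y' i))" and "j < b"
  shows "Y j = Y' j"
proof -
  have "(\<Sum>i<b. \<phi> (Y i - Y' i) * \<zeta> ^ i) = 0"
    using eq by (simp add: diff sum_subtractf algebra_simps)
  from frobenius_conjugates_independent[OF char q _ conjugates this \<open>j < b\<close>]
  have "\<phi> (Y j - Y' j) = 0"
    by (simp add: fixed flip: power)
  then have "Y j - Y' j = 0"
    using injD[OF inj, of "Y j - Y' j" 0] by simp
  then show ?thesis
    by simp
qed

lemma surj_if_coordinates_unique:
  fixes f :: "(nat \<Rightarrow> 'a::finite) \<Rightarrow> 'b::finite"
  assumes unique: "\<And>Y Y' j. f Y = f Y' \<Longrightarrow> j < b \<Longrightarrow> Y j = Y' j"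
    and card: "card (UNIV :: 'b set) = card (UNIV :: 'a set) ^ b"
  shows "\<exists>Y. x = f Y"
proof -
  define D where "D = PiE {..<b} (\<lambda>_. UNIV :: 'a set)"
  have "inj_on f D"
    by (rule inj_onI, rule PiE_ext) (auto simp: D_def intro: unique)
  moreover have "card D = card (UNIV :: 'b set)"
    by (simp add: D_def card_PiE card)
  ultimately have "f ` D = UNIV"
    by (intro card_eq_UNIV_imp_eq_UNIV) (simp_all add: card_image)
  then show ?thesis
    by (metis UNIV_I imageE)
qed

text \<open>Since \<open>\<phi> \<eta>\<close> and \<open>\<zeta> ^ b\<close> both have order \<open>c\<close>, they generate the same group of
  \<open>c\<close>-th roots of unity; splitting exponents of \<open>\<zeta>\<close> modulo \<open>b\<close> then writes every
  \<open>K\<close>-th power of \<open>E\<close> as \<open>\<zeta> ^ j * \<phi> u\<close> with \<open>j < b\<close> and \<open>u\<close> a \<open>k\<close>-th power of \<open>F\<close>.\<close>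

lemma (in field_embedding) range_power_decomposition:
  assumes "0 < b"
    and \<eta>: "has_order \<eta> c" "range (\<lambda>x::'a. x ^ k) = insert 0 (range (\<lambda>i. \<eta> ^ i))"
    and \<zeta>: "has_order \<zeta> (b * c)" "range (\<lambda>x::'b. x ^ K) = insert 0 (range (\<lambda>i. \<zeta> ^ i))"
  shows "range (\<lambda>x::'b. x ^ K) = {\<zeta> ^ j * \<phi> u | j u. j < b \<and> u \<in> range (\<lambda>x. x ^ k)}"
proof -
  have "0 < c"
    using \<eta> by (simp add: has_order_def)
  have "range (\<lambda>i. \<phi> \<eta> ^ i) = range (\<lambda>i. (\<zeta> ^ b) ^ i)"
    using range_power_eq_roots_of_unity[OF has_order_image[OF \<eta>(1)]]
      range_power_eq_roots_of_unity[OF has_order_power[OF \<zeta>(1) refl \<open>0 < c\<close>]] by simp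
  then have same_roots: "(\<zeta> ^ b) ^ l \<in> range (\<lambda>i. \<phi> \<eta> ^ i)" "\<phi> \<eta> ^ s \<in> range (\<lambda>i. (\<zeta> ^ b) ^ i)" for l s
    by (metis rangeI)+
  have "\<zeta> ^ m \<in> {\<zeta> ^ j * \<phi> u | j u. j < b \<and> u \<in> range (\<lambda>x. x ^ k)}" for m
  proof -
    obtain s where s: "(\<zeta> ^ b) ^ (m div b) = \<phi> \<eta> ^ s"
      using same_roots(1) by blast
    have "\<zeta> ^ m = \<zeta> ^ (m mod b) * (\<zeta> ^ b) ^ (m div b)"
      by (simp flip: power_add power_mult)
    also have "\<dots> = \<zeta> ^ (m mod b) * \<phi> (\<eta> ^ s)"
      by (simp only: s power)
    finally have "\<zeta> ^ m = \<zeta> ^ (m mod b) * \<phi> (\<eta> ^ s)" .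
    moreover have "\<eta> ^ s \<in> range (\<lambda>x. x ^ k)" "m mod b < b"
      using \<eta>(2) \<open>0 < b\<close> by auto
    ultimately show ?thesis
      by blast
  qed
  moreover have "(0::'b) \<in> {\<zeta> ^ j * \<phi> u | j u. j < b \<and> u \<in> range (\<lambda>x. x ^ k)}"
  proof -
    have "(0::'b) = \<zeta> ^ 0 * \<phi> 0" "(0::'a) \<in> range (\<lambda>x. x ^ k)"
      using \<eta>(2) by auto
    then show ?thesis
      using \<open>0 < b\<close> by blast
  qed
  ultimately have "range (\<lambda>x::'b. x ^ K) \<subseteq> {\<zeta> ^ j * \<phi> u | j u. j < b \<and> u \<in> range (\<lambda>x. x ^ k)}"
    unfolding \<zeta>(2) by blast
  moreover have "\<zeta> ^ j * \<phi> u \<in> range (\<lambda>x::'b. x ^ K)" if u: "u \<in> range (\<lambda>x. x ^ k)" for j u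
  proof (cases "u = 0")
    case False
    then obtain s where "u = \<eta> ^ s"
      using u \<eta>(2) by auto
    obtain l where "\<phi> \<eta> ^ s = (\<zeta> ^ b) ^ l"
      using same_roots(2) by blast
    then have "\<zeta> ^ j * \<phi> u = \<zeta> ^ (j + b * l)"
      by (simp add: \<open>u = \<eta> ^ s\<close> power power_add power_mult)
    then show ?thesis
      unfolding \<zeta>(2) by blast
  qed (use \<zeta>(2) in auto)
  ultimately show ?thesis
    by blast
qed

lemma coordinate_decomposition_of_finite_fields:
  fixes \<phi> :: "'a::{finite,field} \<Rightarrow> 'b::{finite,field}"
  assumes "field_embedding \<phi>" and p: "prime p" and "0 < a" "0 < b"
    and card_F: "card (UNIV :: 'a set) = p ^ a" and card_E: "card (UNIV :: 'b set) = p ^ (a * b)"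
    and \<eta>: "has_order \<eta> c" "range (\<lambda>x::'a. x ^ k) = insert 0 (range (\<lambda>i. \<eta> ^ i))"
    and \<zeta>: "has_order \<zeta> (b * c)" "range (\<lambda>x::'b. x ^ K) = insert 0 (range (\<lambda>i. \<zeta> ^ i))"
    and primitive: "primitive_divisor (b * c) p (a * b)"
  shows "coordinate_decomposition \<phi> (\<lambda>j. \<zeta> ^ j) b (range (\<lambda>x. x ^ k)) (range (\<lambda>x. x ^ K))"
proof -
  interpret field_embedding \<phi>
    by fact
  have char: "CHAR('b) = p"
    by (rule CHAR_finite_field[OF p card_E])
  have "0 < p ^ a"
    using p prime_gt_0_nat by simp
  have unique: "Y j = Y' j"
    if "(\<Sum>i<b. \<zeta> ^ i * \<phi> (Y i)) = (\<Sum>i<b. \<zeta> ^ i * \<phi> (Y' i))" "j < b" for Y Y' j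
  proof (rule coordinates_unique[where m = a, OF _ _ _ _ that])
    show "x ^ (p ^ a) = x" for x :: 'a
      using finite_field_power_card[of x] card_F by simp
    show "inj_on (\<lambda>i. \<zeta> ^ ((p ^ a) ^ i)) {..<b}"
      by (rule primitive_divisor_conjugates_inj[OF \<open>0 < p ^ a\<close> \<open>0 < b\<close>
            primitive_divisor_power_base[OF primitive \<open>0 < a\<close>] \<zeta>(1)])
  qed (use p char in simp_all)
  have card: "card (UNIV :: 'b set) = card (UNIV :: 'a set) ^ b"
    by (simp add: card_F card_E power_mult)
  show ?thesis
  proof
    show "\<exists>Y. x = (\<Sum>i<b. \<zeta> ^ i * \<phi> (Y i))" for x
      by (rule surj_if_coordinates_unique[of "\<lambda>Y. \<Sum>i<b. \<zeta> ^ i * \<phi> (Y i)" b, OF _ card]) (fact unique)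
  qed (use unique add \<open>0 < b\<close> \<eta>(2) range_power_decomposition[OF \<open>0 < b\<close> \<eta> \<zeta>] in auto)
qed

theorem mainTheorem3:
  fixes p a b c :: nat
  assumes "prime p" and "a > 0" and "b > 0" and "c > 0"
    and "primitive_divisor c p a"
    and "primitive_divisor (b * c) p (a * b)"
    and "card (UNIV :: 'f1 set) = p ^ a"
    and "card (UNIV :: 'f2 set) = p ^ (a * b)"
  shows "waring_exists TYPE('f1::{finite,field}) ((p ^ a - 1) div c)
       \<and> waring_exists TYPE('f2::{finite,field}) ((p ^ (a * b) - 1) div (b * c))
       \<and> waring_number TYPE('f2) ((p ^ (a * b) - 1) div (b * c))
           = b * waring_number TYPE('f1) ((p ^ a - 1) div c)"
proof -
  define k where "k = (p ^ a - 1) div c"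
  define K where "K = (p ^ (a * b) - 1) div (b * c)"
  have "k * c = card (UNIV :: 'f1 set) - 1" "K * (b * c) = card (UNIV :: 'f2 set) - 1"
    using assms(5-8) by (simp_all add: k_def K_def primitive_divisor_def)
  then obtain \<eta> :: 'f1 and \<zeta> :: 'f2
    where \<eta>: "has_order \<eta> c" "range (\<lambda>x::'f1. x ^ k) = insert 0 (range (\<lambda>i. \<eta> ^ i))"
      and \<zeta>: "has_order \<zeta> (b * c)" "range (\<lambda>x::'f2. x ^ K) = insert 0 (range (\<lambda>i. \<zeta> ^ i))"
    using finite_field_range_power assms(3,4) by (metis nat_0_less_mult_iff)
  obtain \<phi> :: "'f1 \<Rightarrow> 'f2" where "field_embedding \<phi>"
    using finite_field_embedding[OF assms(1,2) dvd_triv_left assms(7,8)] field_embedding.intro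
    by metis
  then have "coordinate_decomposition \<phi> (\<lambda>j. \<zeta> ^ j) b (range (\<lambda>x. x ^ k)) (range (\<lambda>x. x ^ K))"
    using coordinate_decomposition_of_finite_fields assms(1-3,6-8) \<eta> \<zeta> by blast
  moreover have "waring_exists TYPE('f1) k"
  proof (rule waring_exists_if_power_basis_in_range[OF assms(1,7)])
    show "inj_on (\<lambda>i. \<eta> ^ (p ^ i)) {..<a}"
      using primitive_divisor_conjugates_inj[OF _ assms(2,5) \<eta>(1)] assms(1) prime_gt_0_nat by blast
    have "1 < p ^ a"
      using assms(1,2) prime_gt_1_nat one_less_power by blast
    then show "0 < k"
      using \<open>k * c = _\<close> assms(7) by (cases "k = 0") auto
  qed (use \<eta>(2) in auto)
  ultimately show ?thesis
    using waring_number_of_coordinate_decomposition unfolding k_def K_def by blast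
qed

end
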